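(* Let $M>0$, $\beta^*>0$, and let $g$ be the log-normal density $g(t)=\frac{1}{t\sigma\sqrt{2\pi}}\exp\!\big(-\frac{(\ln t-\mu)^2}{2\sigma^2}\big)$ for $t>0$, $g(t)=0$ for $t\le0$ ($\mu\in\mathbb{R}$, $\sigma>0$). Let $I$ be the unique $C^1$ solution on $[0,\infty)$ of \[ I'(t)=\beta^*(M-I(t))\Big(I(t)-\int_0^t g(t-s)I(s)\,ds\Big),\qquad I(0)=I_0\in[0,M]. \] Then the limit $I_\infty:=\lim_{t\to\infty}I(t)$ exists in $\mathbb{R}$. *)

theory Defs
  imports "HOL-Analysis.Analysis"
begin

definition lognormal_density :: "real \<Rightarrow> real \<Rightarrow> real \<Rightarrow> real" where
  "lognormal_density \<mu> \<sigma> t =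
     (if t > 0 then exp (- ((ln t - \<mu>)^2) / (2 * \<sigma>^2)) / (t * \<sigma> * sqrt (2 * pi)) else 0)"

end

theory Submission
  imports Defs "HOL-Probability.Probability" "HOL-Real_Asymp.Real_Asymp"
begin

(* Because the kernel g is nonnegative with mass \<integral>\<^sub>0\<^sup>t g < 1 (for the lognormal density:
   total mass 1, and [t, \<infinity>) carries positive mass), the memory term
   \<integral>\<^sub>0\<^sup>t g(t - s) I(s) ds stays strictly below a positive value I(c) that bounds I on [0, c].
   So at a positive running maximum below M the derivative of I is positive and I keeps growing.
   The levels M and 0 are absorbing, by Gronwall's inequality for (I - M)\<^sup>2 and I\<^sup>2, and I never
   crosses M. Hence I is nondecreasing and bounded by M, and converges. *)

lemma integral_Icc_0_reflect:
  fixes f :: "real \<Rightarrow> 'a::banach"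
  shows "integral {0..t} (\<lambda>s. f (t - s)) = integral {0..t} f"
proof -
  have "integral {-t - -t..0 - -t} (\<lambda>s. f (- (s + -t))) = integral {-t..0} (\<lambda>x. f (- x))"
    by (rule integral_shift_real_ivl)
  also have "\<dots> = integral {0..t} f"
    using Henstock_Kurzweil_Integration.integral_reflect_real[of t 0 f] by simp
  finally show ?thesis by simp
qed

lemma convolution_le_kernel_mass:
  fixes g f :: "real \<Rightarrow> real"
  assumes "continuous_on {0..t} g" "\<And>x. x \<in> {0..t} \<Longrightarrow> 0 \<le> g x"
    and "continuous_on {0..t} f" "\<And>s. s \<in> {0..t} \<Longrightarrow> f s \<le> h"
  shows "integral {0..t} (\<lambda>s. g (t - s) * f s) \<le> h * integral {0..t} g"
proof -
  have reflected: "continuous_on {0..t} (\<lambda>s. g (t - s))"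
    by (rule continuous_on_compose2[OF assms(1)]) (auto intro: continuous_on_diff)
  have "integral {0..t} (\<lambda>s. g (t - s) * f s) \<le> integral {0..t} (\<lambda>s. g (t - s) * h)"
  proof (rule integral_le)
    show "(\<lambda>s. g (t - s) * f s) integrable_on {0..t}"
      using reflected assms(3) by (intro integrable_continuous_interval continuous_on_mult)
    show "(\<lambda>s. g (t - s) * h) integrable_on {0..t}"
      using reflected by (intro integrable_continuous_interval continuous_on_mult continuous_on_const)
    fix s assume "s \<in> {0..t}"
    then show "g (t - s) * f s \<le> g (t - s) * h"
      using assms(2,4) by (intro mult_left_mono) auto
  qed
  also have "\<dots> = h * integral {0..t} g"
    unfolding integral_mult_left integral_Icc_0_reflect by (rule mult.commute)
  finally show ?thesis .
qed

lemma gronwall_nonpos: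
  fixes v v' :: "real \<Rightarrow> real"
  assumes deriv: "\<And>x. x \<in> {a..b} \<Longrightarrow> (v has_real_derivative v' x) (at x within {a..b})"
    and le: "\<And>x. x \<in> {a..b} \<Longrightarrow> v' x \<le> K * v x"
    and "v a \<le> 0" and t: "t \<in> {a..b}"
  shows "v t \<le> 0"
proof -
  define h where "h x = v x * exp (- K * x)" for x
  have "continuous_on {a..b} v"
    using deriv by (rule DERIV_continuous_on)
  then have "continuous_on {a..t} v"
    by (rule continuous_on_subset) (use t in auto)
  then have "continuous_on {a..t} h"
    unfolding h_def by (intro continuous_intros)
  have "h t \<le> h a"
  proof (rule DERIV_nonpos_imp_decreasing_open[OF _ _ \<open>continuous_on {a..t} h\<close>])
    fix x assume x: "a < x" "x < t"
    then have "(v has_real_derivative v' x) (at x)"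
      using deriv[of x] t at_within_interior[of x "{a..b}"] by auto
    then have "(h has_real_derivative (v' x - K * v x) * exp (- K * x)) (at x)"
      unfolding h_def by (auto intro!: derivative_eq_intros simp: algebra_simps)
    moreover have "(v' x - K * v x) * exp (- K * x) \<le> 0"
      using le[of x] x t by (intro mult_nonpos_nonneg) auto
    ultimately show "\<exists>y. (h has_real_derivative y) (at x) \<and> y \<le> 0" by blast
  qed (use t in auto)
  moreover have "h a \<le> 0"
    using \<open>v a \<le> 0\<close> by (simp add: h_def mult_nonpos_nonneg)
  ultimately have "v t * exp (- K * t) \<le> 0"
    by (simp add: h_def)
  then show ?thesis
    by (simp add: mult_le_0_iff)
qed

lemma mono_on_bounded_tendsto_at_top:
  fixes f :: "'a::linorder \<Rightarrow> 'b::{conditionally_complete_linorder, linorder_topology}"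
  assumes "mono_on {T..} f" and "\<And>x. T \<le> x \<Longrightarrow> f x \<le> B"
  shows "(f \<longlongrightarrow> (SUP x\<in>{T..}. f x)) at_top"
proof (rule increasing_tendsto)
  have bdd: "bdd_above (f ` {T..})"
    using assms(2) by (intro bdd_aboveI2) auto
  show "eventually (\<lambda>x. f x \<le> (SUP x\<in>{T..}. f x)) at_top"
    using eventually_ge_at_top[of T] by eventually_elim (auto intro: cSUP_upper bdd)
  fix l assume "l < (SUP x\<in>{T..}. f x)"
  then obtain y where "T \<le> y" "l < f y"
    using less_cSUP_iff[OF _ bdd] by auto
  show "eventually (\<lambda>x. l < f x) at_top"
    using eventually_ge_at_top[of y]
  proof eventually_elim
    case (elim x)
    then have "f y \<le> f x"
      using \<open>T \<le> y\<close> by (intro mono_onD[OF assms(1)]) auto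
    with \<open>l < f y\<close> show "l < f x"
      by simp
  qed
qed

locale logistic_memory_ode =
  fixes M \<beta> :: real and g I :: "real \<Rightarrow> real"
  assumes M_pos: "0 < M" and beta_pos: "0 < \<beta>"
    and kernel_nonneg: "\<And>x. 0 \<le> x \<Longrightarrow> 0 \<le> g x"
    and kernel_continuous: "continuous_on {0..} g"
    and kernel_mass_less_1: "\<And>t. 0 \<le> t \<Longrightarrow> integral {0..t} g < 1"
    and initial_nonneg: "0 \<le> I 0" and initial_le_M: "I 0 \<le> M"
    and I_has_derivative: "\<And>t. 0 \<le> t \<Longrightarrow> (I has_real_derivative
          \<beta> * (M - I t) * (I t - integral {0..t} (\<lambda>s. g (t - s) * I s))) (at t within {0..})"
begin

abbreviation memory :: "real \<Rightarrow> real" where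
  "memory t \<equiv> integral {0..t} (\<lambda>s. g (t - s) * I s)"

lemma I_continuous: "continuous_on {0..} I"
  using I_has_derivative by (intro DERIV_continuous_on) auto

lemma I_bounded_Icc: "\<exists>B\<ge>0. \<forall>s\<in>{0..b}. \<bar>I s\<bar> \<le> B"
proof -
  have "compact (I ` {0..b})"
    by (rule compact_continuous_image[OF continuous_on_subset[OF I_continuous]]) auto
  then obtain B where "\<forall>s\<in>{0..b}. \<bar>I s\<bar> \<le> B"
    by (auto dest!: compact_imp_bounded simp: bounded_real)
  then show ?thesis
    by (intro exI[of _ "max B 0"]) auto
qed

lemma memory_le:
  assumes "0 \<le> t" "\<And>s. s \<in> {0..t} \<Longrightarrow> I s \<le> h"
  shows "memory t \<le> h * integral {0..t} g"
  using assms kernel_nonneg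
  by (intro convolution_le_kernel_mass continuous_on_subset[OF kernel_continuous]
        continuous_on_subset[OF I_continuous]) auto

lemma I_stays_at:
  assumes "0 \<le> \<tau>" "\<tau> \<le> b" "I \<tau> = c"
    and "\<And>t. t \<in> {\<tau>..b} \<Longrightarrow>
      (I t - c) * (\<beta> * (M - I t) * (I t - memory t)) \<le> K * (I t - c)\<^sup>2"
  shows "I b = c"
proof -
  have "(I b - c)\<^sup>2 \<le> 0"
  proof (rule gronwall_nonpos[where v = "\<lambda>t. (I t - c)\<^sup>2" and K = "2 * K"])
    fix t assume t: "t \<in> {\<tau>..b}"
    then have "(I has_real_derivative \<beta> * (M - I t) * (I t - memory t)) (at t within {\<tau>..b})"
      using assms(1) by (intro DERIV_subset[OF I_has_derivative]) auto
    then show "((\<lambda>t. (I t - c)\<^sup>2) has_real_derivative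
        2 * ((I t - c) * (\<beta> * (M - I t) * (I t - memory t)))) (at t within {\<tau>..b})"
      by (auto intro!: derivative_eq_intros)
    show "2 * ((I t - c) * (\<beta> * (M - I t) * (I t - memory t))) \<le> 2 * K * (I t - c)\<^sup>2"
      using assms(4)[OF t] by simp
  qed (use assms in auto)
  then show ?thesis
    by simp
qed

lemma I_stays_at_M:
  assumes "0 \<le> \<tau>" "\<tau> \<le> t" "I \<tau> = M"
  shows "I t = M"
proof -
  obtain B where B: "0 \<le> B" "\<forall>s\<in>{0..t}. \<bar>I s\<bar> \<le> B"
    using I_bounded_Icc by blast
  then have upper: "I s \<le> B" and lower: "- I s \<le> B" if "s \<in> {0..t}" for s
    using that by (auto simp: abs_le_iff)
  show ?thesis
  proof (rule I_stays_at[OF assms, where K = "2 * \<beta> * B"])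
    fix s assume s: "s \<in> {\<tau>..t}"
    have "memory s \<le> B * integral {0..s} g"
      using s assms upper by (intro memory_le) auto
    also have "\<dots> \<le> B"
      using s assms B kernel_mass_less_1[of s] by (intro mult_left_le) auto
    finally have "memory s - I s \<le> 2 * B"
      using s assms lower[of s] by simp
    then have "\<beta> * (I s - M)\<^sup>2 * (memory s - I s) \<le> \<beta> * (I s - M)\<^sup>2 * (2 * B)"
      using beta_pos by (intro mult_left_mono) auto
    then show "(I s - M) * (\<beta> * (M - I s) * (I s - memory s)) \<le> 2 * \<beta> * B * (I s - M)\<^sup>2"
      by (simp add: power2_eq_square algebra_simps)
  qed
qed

lemma I_le_M:
  assumes "0 \<le> t"
  shows "I t \<le> M"
proof (rule ccontr)
  assume "\<not> I t \<le> M"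
  moreover have "continuous_on {0..t} I"
    by (rule continuous_on_subset[OF I_continuous]) auto
  ultimately obtain \<tau> where "0 \<le> \<tau>" "\<tau> \<le> t" "I \<tau> = M"
    using IVT'[of I 0 M t] assms initial_le_M by auto
  then have "I t = M"
    by (rule I_stays_at_M)
  with \<open>\<not> I t \<le> M\<close> show False
    by simp
qed

lemma I_stays_at_0:
  assumes "0 \<le> b" "\<And>s. s \<in> {0..b} \<Longrightarrow> I s \<le> 0"
  shows "I b = 0"
proof -
  obtain B where B: "0 \<le> B" "\<forall>s\<in>{0..b}. \<bar>I s\<bar> \<le> B"
    using I_bounded_Icc by blast
  have "I 0 = 0"
    using initial_nonneg assms(1) assms(2)[of 0] by simp
  then show ?thesis
  proof (rule I_stays_at[OF order.refl assms(1), where K = "\<beta> * (M + B)"])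
    fix s assume s: "s \<in> {0..b}"
    have "memory s \<le> 0"
      using memory_le[of s 0] s assms by auto
    have "M - I s \<le> M + B" "0 \<le> M - I s"
      using s B(2) assms(2)[OF s] M_pos by (auto simp: abs_le_iff)
    moreover have "I s * (I s - memory s) \<le> (I s)\<^sup>2"
      using \<open>memory s \<le> 0\<close> assms(2)[OF s]
      by (simp add: power2_eq_square right_diff_distrib mult_nonpos_nonpos)
    ultimately have "(M - I s) * (I s * (I s - memory s)) \<le> (M - I s) * (I s)\<^sup>2"
      by (intro mult_left_mono)
    also have "\<dots> \<le> (M + B) * (I s)\<^sup>2"
      using \<open>M - I s \<le> M + B\<close> by (intro mult_right_mono) auto
    finally have "\<beta> * ((M - I s) * (I s * (I s - memory s))) \<le> \<beta> * ((M + B) * (I s)\<^sup>2)"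
      using beta_pos by (intro mult_left_mono) auto
    then show "(I s - 0) * (\<beta> * (M - I s) * (I s - memory s)) \<le> \<beta> * (M + B) * (I s - 0)\<^sup>2"
      by (simp only: diff_zero mult.assoc mult.left_commute)
  qed
qed

lemma I_exceeds_running_max:
  assumes "0 \<le> c" "c < b" "0 < I c" "I c < M" "\<And>s. s \<in> {0..c} \<Longrightarrow> I s \<le> I c"
  shows "\<exists>s\<in>{c<..b}. I c < I s"
proof -
  have "memory c \<le> I c * integral {0..c} g"
    using assms by (intro memory_le) auto
  also have "\<dots> < I c"
    using kernel_mass_less_1[OF assms(1)] assms(3) by simp
  finally have "0 < \<beta> * (M - I c) * (I c - memory c)"
    using assms beta_pos by simp
  from has_real_derivative_pos_inc_right[OF I_has_derivative[OF assms(1)] this]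
  obtain d where "0 < d" "\<And>h. 0 < h \<Longrightarrow> h < d \<Longrightarrow> I c < I (c + h)"
    using assms(1) by auto
  then show ?thesis
    using assms(2) by (intro bexI[of _ "c + min (d / 2) (b - c)"]) auto
qed

lemma I_mono: "mono_on {0..} I"
proof (rule mono_onI)
  fix x y :: real assume "x \<in> {0..}" "y \<in> {0..}" "x \<le> y"
  have "continuous_on {0..y} I"
    by (rule continuous_on_subset[OF I_continuous]) auto
  then obtain c where c: "0 \<le> c" "c \<le> y" "\<And>s. s \<in> {0..y} \<Longrightarrow> I s \<le> I c"
    using continuous_attains_sup[of "{0..y}" I] \<open>y \<in> {0..}\<close> by auto
  then have "I x \<le> I c"
    using \<open>x \<in> {0..}\<close> \<open>x \<le> y\<close> by auto
  have "I c \<le> M"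
    using I_le_M c(1) .
  then consider "c = y" | "I c = M" | "I c \<le> 0" | "c < y" "0 < I c" "I c < M"
    using c(2) by fastforce
  then show "I x \<le> I y"
  proof cases
    case 1
    with \<open>I x \<le> I c\<close> show ?thesis
      by simp
  next
    case 2
    with \<open>I x \<le> I c\<close> show ?thesis
      using I_stays_at_M[of c y] c by simp
  next
    case 3
    then have "I s \<le> 0" if "s \<in> {0..y}" for s
      using c(3)[OF that] by simp
    then have "I y = 0"
      using I_stays_at_0[of y] \<open>y \<in> {0..}\<close> by simp
    with \<open>I x \<le> I c\<close> 3 show ?thesis
      by simp
  next
    case 4
    then obtain s where s: "c < s" "s \<le> y" "I c < I s"
      using I_exceeds_running_max[of c y] c by auto
    then have "I s \<le> I c"
      using c by auto
    with s show ?thesis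
      by linarith
  qed
qed

theorem I_tendsto_Sup: "(I \<longlongrightarrow> (SUP t\<in>{0..}. I t)) at_top"
  using I_mono I_le_M by (rule mono_on_bounded_tendsto_at_top)

end

lemma lognormal_density_nonneg: "0 < \<sigma> \<Longrightarrow> 0 \<le> lognormal_density \<mu> \<sigma> x"
  by (simp add: lognormal_density_def)

lemma lognormal_density_eq_normal_density:
  assumes "0 < \<sigma>" "0 < x"
  shows "lognormal_density \<mu> \<sigma> x = normal_density \<mu> \<sigma> (ln x) / x"
proof -
  have "sqrt (2 * pi * \<sigma>\<^sup>2) = \<sigma> * sqrt (2 * pi)"
    using assms by (simp add: real_sqrt_mult)
  then show ?thesis
    using assms by (simp add: lognormal_density_def normal_density_def)
qed

lemma isCont_lognormal_density:
  assumes "0 < \<sigma>"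
  shows "isCont (lognormal_density \<mu> \<sigma>) x"
proof (cases x "0 :: real" rule: linorder_cases)
  case less
  have "eventually (\<lambda>y. y \<in> {..<0}) (nhds x)"
    using less by (intro eventually_nhds_in_open) auto
  then have "eventually (\<lambda>y. lognormal_density \<mu> \<sigma> y = 0) (nhds x)"
    by eventually_elim (simp add: lognormal_density_def)
  then show ?thesis
    using isCont_cong[of "lognormal_density \<mu> \<sigma>" "\<lambda>_. 0" x] by simp
next
  case equal
  have "((\<lambda>y. exp (- ((ln y - \<mu>)^2) / (2 * \<sigma>^2)) / (y * \<sigma> * sqrt (2 * pi))) \<longlongrightarrow> 0) (at_right 0)"
    using assms by real_asymp
  then have "(lognormal_density \<mu> \<sigma> \<longlongrightarrow> 0) (at_right 0)"
    by (rule Lim_transform_eventually)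
      (auto simp: eventually_at_right_less lognormal_density_def eventually_at_filter)
  moreover have "(lognormal_density \<mu> \<sigma> \<longlongrightarrow> 0) (at_left 0)"
    by (rule tendsto_eventually) (simp add: eventually_at_filter lognormal_density_def)
  ultimately show ?thesis
    using equal by (simp add: isCont_def filterlim_split_at lognormal_density_def)
next
  case greater
  have "eventually (\<lambda>y. y \<in> {0<..}) (nhds x)"
    using greater by (intro eventually_nhds_in_open) auto
  then have "eventually (\<lambda>y. lognormal_density \<mu> \<sigma> y =
      exp (- ((ln y - \<mu>)^2) / (2 * \<sigma>^2)) / (y * \<sigma> * sqrt (2 * pi))) (nhds x)"
    by eventually_elim (simp add: lognormal_density_def)
  moreover have "isCont (\<lambda>y. exp (- ((ln y - \<mu>)^2) / (2 * \<sigma>^2)) / (y * \<sigma> * sqrt (2 * pi))) x"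
    using greater assms by (intro continuous_intros) auto
  ultimately show ?thesis
    by (subst isCont_cong) auto
qed

lemma continuous_on_normal_density: "0 < \<sigma> \<Longrightarrow> continuous_on S (normal_density \<mu> \<sigma>)"
  unfolding normal_density_def by (intro continuous_intros) auto

lemma integral_normal_density_le_1:
  assumes "0 < \<sigma>"
  shows "integral {u..v} (normal_density \<mu> \<sigma>) \<le> 1"
proof -
  have "(normal_density \<mu> \<sigma> has_integral 1) UNIV"
    using has_integral_integral_lborel[OF integrable_normal_density] assms by simp
  then have "integral {u..v} (normal_density \<mu> \<sigma>) \<le> integral UNIV (normal_density \<mu> \<sigma>)"
    using assms
    by (intro integral_subset_le integrable_continuous_interval continuous_on_normal_density)
      (auto simp: integrable_on_def)
  also have "\<dots> = 1"
    using \<open>(normal_density \<mu> \<sigma> has_integral 1) UNIV\<close> by (rule integral_unique)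
  finally show ?thesis .
qed

lemma has_integral_lognormal_density:
  assumes "0 < \<sigma>" "0 < a" "a \<le> t"
  shows "(lognormal_density \<mu> \<sigma> has_integral integral {ln a..ln t} (normal_density \<mu> \<sigma>)) {a..t}"
proof -
  have "((\<lambda>x. (1 / x) *\<^sub>R normal_density \<mu> \<sigma> (ln x)) has_integral
          integral {ln a..ln t} (normal_density \<mu> \<sigma>)) {a..t}"
    using assms
    by (intro has_integral_substitution[where c = "ln a" and d = "ln t"]
          continuous_on_normal_density)
      (auto intro!: derivative_eq_intros)
  then show ?thesis
    by (rule has_integral_eq[rotated])
      (use assms in \<open>simp add: lognormal_density_eq_normal_density\<close>)
qed

lemma integral_lognormal_density_less_1:
  assumes "0 < \<sigma>" "0 \<le> t"
  shows "integral {0..t} (lognormal_density \<mu> \<sigma>) < 1"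
proof (cases "t = 0")
  case False
  with assms have "0 < t" by simp
  define c where "c = integral {ln t..ln t + 1} (normal_density \<mu> \<sigma>)"
  have "0 < c"
    using integral_less_real[where a = "ln t" and b = "ln t + 1" and f = "\<lambda>_. 0"
        and g = "normal_density \<mu> \<sigma>"]
      continuous_on_normal_density[OF assms(1)] normal_density_pos[OF assms(1)]
    by (simp add: c_def)
  (* On [a, t] with a > 0 the substitution x = exp u gives the normal mass of [ln a, ln t], which
     misses the mass c of [ln t, ln t + 1]; the bound survives the limit a \<rightarrow> 0. *)
  have "integral {a..t} (lognormal_density \<mu> \<sigma>) \<le> 1 - c" if "a \<in> {0<..t}" for a
  proof -
    have "integral {a..t} (lognormal_density \<mu> \<sigma>) = integral {ln a..ln t} (normal_density \<mu> \<sigma>)"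
      using that assms by (intro integral_unique has_integral_lognormal_density) auto
    also have "\<dots> = integral {ln a..ln t + 1} (normal_density \<mu> \<sigma>) - c"
      using that Henstock_Kurzweil_Integration.integral_combine[where a = "ln a" and c = "ln t"
          and b = "ln t + 1" and f = "normal_density \<mu> \<sigma>"]
        integrable_continuous_interval[OF continuous_on_normal_density[OF assms(1)]]
      by (simp add: c_def)
    also have "\<dots> \<le> 1 - c"
      using integral_normal_density_le_1[OF assms(1)] by simp
    finally show ?thesis .
  qed
  moreover have "continuous_on {0..t} (\<lambda>a. integral {a..t} (lognormal_density \<mu> \<sigma>))"
    using assms
    by (intro indefinite_integral_continuous_1' integrable_continuous_interval
          continuous_at_imp_continuous_on ballI isCont_lognormal_density)
  ultimately have "integral {0..t} (lognormal_density \<mu> \<sigma>) \<le> 1 - c"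
    using continuous_le_on_closure[of "{0<..t}" "\<lambda>a. integral {a..t} (lognormal_density \<mu> \<sigma>)" 0]
      \<open>0 < t\<close> by simp
  with \<open>0 < c\<close> show ?thesis by simp
qed simp

theorem corollary3p7:
  fixes M \<beta> \<mu> \<sigma> I0 :: real and I :: "real \<Rightarrow> real"
  assumes "M > 0" and "\<beta> > 0" and "\<sigma> > 0"
    and "0 \<le> I0" and "I0 \<le> M"
    and "I 0 = I0"
    and "\<forall>t\<ge>0. (I has_real_derivative
           (\<beta> * (M - I t) * (I t - integral {0..t} (\<lambda>s. lognormal_density \<mu> \<sigma> (t - s) * I s))))
           (at t within {0..})"
    and "continuous_on {0..}
           (\<lambda>t. \<beta> * (M - I t) * (I t - integral {0..t} (\<lambda>s. lognormal_density \<mu> \<sigma> (t - s) * I s)))"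
  shows "\<exists>L::real. (I \<longlongrightarrow> L) at_top"
proof -
  interpret logistic_memory_ode M \<beta> "lognormal_density \<mu> \<sigma>" I
  proof unfold_locales
    show "continuous_on {0..} (lognormal_density \<mu> \<sigma>)"
      using assms(3) by (intro continuous_at_imp_continuous_on ballI isCont_lognormal_density)
  qed (simp_all add: assms lognormal_density_nonneg integral_lognormal_density_less_1)
  show ?thesis
    using I_tendsto_Sup by (rule exI)
qed

end
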